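(* Let $N_1,\dots,N_K,M_1,\dots,M_K\ge1$ be integers such that $\mathcal N_{\mathrm{Var}}(\mathcal T_{\mathrm{RX}},\mathcal T_{\mathrm{TX}})\ge\mathcal N_{\mathrm{Eq}}(\mathcal T_{\mathrm{RX}},\mathcal T_{\mathrm{TX}})$ for all $\mathcal T_{\mathrm{RX}},\mathcal T_{\mathrm{TX}}\subseteq\mathcal K$, and let $\mathcal S_{\mathrm{RX}},\mathcal S_{\mathrm{TX}}\subseteq\mathcal K$ satisfy $\mathcal N_{\mathrm{Var}}(\mathcal S_{\mathrm{RX}},\mathcal S_{\mathrm{TX}})=\mathcal N_{\mathrm{Eq}}(\mathcal S_{\mathrm{RX}},\mathcal S_{\mathrm{TX}})$. Then for all $\mathcal S'_{\mathrm{RX}},\mathcal S'_{\mathrm{TX}}\subseteq\mathcal K$ with $\mathcal S'_{\mathrm{RX}}\cap\mathcal S_{\mathrm{RX}}=\emptyset$ and $\mathcal S'_{\mathrm{TX}}\cap\mathcal S_{\mathrm{TX}}=\emptyset$, $$\mathcal N_{\mathrm{Var}}(\mathcal S'_{\mathrm{RX}},\mathcal S'_{\mathrm{TX}})\ \ge\ \mathcal N_{\mathrm{Eq}}(\mathcal S_{\mathrm{RX}},\mathcal S'_{\mathrm{TX}})+\mathcal N_{\mathrm{Eq}}(\mathcal S'_{\mathrm{RX}},\mathcal S_{\mathrm{TX}})+\mathcal N_{\mathrm{Eq}}(\mathcal S'_{\mathrm{RX}},\mathcal S'_{\mathrm{TX}}).$$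
   Context: $\mathcal K=\{1,\dots,K\}$. For $\mathcal A,\mathcal B\subseteq\mathcal K$: $\mathcal N_{\mathrm{Var}}(\mathcal A,\mathcal B)=\sum_{i\in\mathcal A}(N_i-1)+\sum_{i\in\mathcal B}(M_i-1)$ and $\mathcal N_{\mathrm{Eq}}(\mathcal A,\mathcal B)=\#\{(j,k): j\in\mathcal A,k\in\mathcal B,j\ne k\}$. *)

theory Defs
  imports Main
begin

text \<open>Index set K = {1..K}; N, M give the antenna numbers per user.\<close>

definition NVar :: "(nat \<Rightarrow> nat) \<Rightarrow> (nat \<Rightarrow> nat) \<Rightarrow> nat set \<Rightarrow> nat set \<Rightarrow> int" where
  "NVar N M A B = (\<Sum>i\<in>A. (int (N i) - 1)) + (\<Sum>i\<in>B. (int (M i) - 1))"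

definition NEq :: "nat set \<Rightarrow> nat set \<Rightarrow> int" where
  "NEq A B = int (card {(j, k). j \<in> A \<and> k \<in> B \<and> j \<noteq> k})"

end

theory Submission
  imports Defs
begin

(* Both counting functions are additive over disjoint unions:
   NVar is a sum over the receiver and transmitter sets, and NEq counts the
   pairs (j,k) with j in the first set, k in the second and j \<noteq> k, so it
   splits along a disjoint decomposition of either argument.  Apply the
   properness hypothesis to the enlarged sets SRX \<union> SRX', STX \<union> STX'.
   By additivity, its left side is NVar(S) + NVar(S') and its right side is
   NEq(S,S) + NEq(S,S') + NEq(S',S) + NEq(S',S').  Since S is tight,
   NVar(S) = NEq(S,S) cancels, leaving exactly the claimed inequality. *)

lemma finite_offdiag_pairs:
  assumes "finite A" "finite B"
  shows "finite {(j, k). j \<in> A \<and> k \<in> B \<and> j \<noteq> k}"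
  by (rule finite_subset[of _ "A \<times> B"]) (use assms in auto)

lemma NEq_Un_left:
  assumes "finite A" "finite A'" "finite B" "A \<inter> A' = {}"
  shows "NEq (A \<union> A') B = NEq A B + NEq A' B"
proof -
  have split: "{(j, k). j \<in> A \<union> A' \<and> k \<in> B \<and> j \<noteq> k} =
        {(j, k). j \<in> A \<and> k \<in> B \<and> j \<noteq> k} \<union> {(j, k). j \<in> A' \<and> k \<in> B \<and> j \<noteq> k}"
    by auto
  show ?thesis
    unfolding NEq_def split
    by (subst card_Un_disjoint) (use assms finite_offdiag_pairs in auto)
qed

lemma NEq_Un_right:
  assumes "finite A" "finite B" "finite B'" "B \<inter> B' = {}"
  shows "NEq A (B \<union> B') = NEq A B + NEq A B'"
proof -
  have split: "{(j, k). j \<in> A \<and> k \<in> B \<union> B' \<and> j \<noteq> k} =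
        {(j, k). j \<in> A \<and> k \<in> B \<and> j \<noteq> k} \<union> {(j, k). j \<in> A \<and> k \<in> B' \<and> j \<noteq> k}"
    by auto
  show ?thesis
    unfolding NEq_def split
    by (subst card_Un_disjoint) (use assms finite_offdiag_pairs in auto)
qed

lemma NEq_Un_Un:
  assumes "finite A" "finite A'" "finite B" "finite B'"
    and "A \<inter> A' = {}" "B \<inter> B' = {}"
  shows "NEq (A \<union> A') (B \<union> B') = NEq A B + NEq A B' + NEq A' B + NEq A' B'"
  using assms by (simp add: NEq_Un_left NEq_Un_right)

lemma NVar_Un_Un:
  assumes "finite A" "finite A'" "finite B" "finite B'"
    and "A \<inter> A' = {}" "B \<inter> B' = {}"
  shows "NVar N M (A \<union> A') (B \<union> B') = NVar N M A B + NVar N M A' B'"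
  using assms unfolding NVar_def by (simp add: sum.union_disjoint)

theorem mainTheorem5:
  fixes K :: nat and N M :: "nat \<Rightarrow> nat"
    and SRX STX SRX' STX' :: "nat set"
  assumes N_pos: "\<forall>i\<in>{1..K}. N i \<ge> 1"
    and M_pos: "\<forall>i\<in>{1..K}. M i \<ge> 1"
    and proper: "\<forall>TRX TTX. TRX \<subseteq> {1..K} \<longrightarrow> TTX \<subseteq> {1..K} \<longrightarrow>
                   NVar N M TRX TTX \<ge> NEq TRX TTX"
    and S_sub: "SRX \<subseteq> {1..K}" "STX \<subseteq> {1..K}"
    and S_tight: "NVar N M SRX STX = NEq SRX STX"
    and S'_sub: "SRX' \<subseteq> {1..K}" "STX' \<subseteq> {1..K}"
    and disj: "SRX' \<inter> SRX = {}" "STX' \<inter> STX = {}"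
  shows "NVar N M SRX' STX' \<ge> NEq SRX STX' + NEq SRX' STX + NEq SRX' STX'"
proof -
  have fin: "finite SRX" "finite SRX'" "finite STX" "finite STX'"
    using S_sub S'_sub finite_subset by blast+
  have disj': "SRX \<inter> SRX' = {}" "STX \<inter> STX' = {}"
    using disj by auto
  have "NEq (SRX \<union> SRX') (STX \<union> STX') \<le> NVar N M (SRX \<union> SRX') (STX \<union> STX')"
    using proper S_sub S'_sub by auto
  then have "NEq SRX STX + NEq SRX STX' + NEq SRX' STX + NEq SRX' STX'
             \<le> NVar N M SRX STX + NVar N M SRX' STX'"
    by (simp only: NEq_Un_Un[OF fin disj'] NVar_Un_Un[OF fin disj'])
  then show ?thesis
    using S_tight by linarith
qed

end
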